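(* Let $\Lambda$ be a positive integer, $r\in[\Lambda-1]$ an integer, and $K_\alpha\ge0$ integers for $\alpha\in[\Lambda-r]$, not all zero, and let $K=\sum_{\alpha\in[\Lambda-r]}K_\alpha\binom{\Lambda}{\alpha}$. Consider an MADC model on a homogeneous network with $\Lambda$ mapper nodes and $K$ reducer nodes whose mapper–reducer connections are as in the GC-MRG (for each $\alpha\in[\Lambda-r]$ and each $\alpha$-subset $U$ of mapper nodes, exactly $K_\alpha$ reducer nodes are connected exactly to the mapper nodes in $U$), and in which every file is stored at exactly $r$ mapper nodes (computation load $r$). Then the optimal communication load $L^*(r)$ satisfies $$L^*(r)\ \ge\ L^{lb}_{new}(r)=\frac{\sum_{\alpha\in[\Lambda-r]}K_\alpha\binom{\Lambda-r}{\alpha}}{K\sum_{\alpha\in[\Lambda-r]}K_\alpha\left(\binom{\Lambda}{\alpha}-\binom{\Lambda-r}{\alpha}\right)}.$$ Consequently, the computation–communication curve is lower bounded by the lower convex envelope of the points $(r,L^{lb}_{new}(r))$, $r\in[\Lambda-1]$.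
   Context: Notation: $[0,n)=\{0,1,\dots,n-1\}$, $[n]=\{1,\dots,n\}$. MADC (multi-access distributed computing) model: There are $\Lambda$ mapper nodes indexed by $[0,\Lambda)$ and $K$ reducer nodes. There are $N$ input files $w_0,\dots,w_{N-1}\in\mathbb{F}_{2^d}$ and $Q$ output functions $\phi_q:\mathbb{F}_{2^d}^N\to\mathbb{F}_{2^b}$, $q\in[0,Q)$, of the form $\phi_q(w_0,\dots,w_{N-1})=h_q(v_{q,0},\dots,v_{q,N-1})$, where $v_{q,n}=g_{q,n}(w_n)\in\mathbb{F}_{2^t}$ is called an intermediate value (IV). Each reducer node $k$ is assigned a set $\mathcal W_k\subseteq[0,Q)$ of $Q/K$ output functions, these sets being pairwise disjoint. Map phase: each mapper node $\lambda$ stores a set of files and computes all IVs $v_{q,n}$, $q\in[0,Q)$, of its stored files. Each reducer node is connected to a set of mapper nodes and has access to every file stored at any mapper node it is connected to, together with all IVs computed from those files. Shuffle phase: each reducer node $k$ broadcasts to all other reducer nodes, error-free, a message $\mathbf X_k$ of $l_k$ bits that is a function of the IVs it has access to. Reduce phase: each reducer node $k$ must recover all IVs $v_{q,n}$ with $q\in\mathcal W_k$, $n\in[0,N)$, from the received messages and the IVs it has access to. The computation load $r$ is the total number of files stored across mapper nodes divided by $N$; the communication load is $L=\sum_k l_k/(QNt)$. The optimal communication load $L^*(r)$ is the infimum of achievable communication loads over all map assignments with computation load $r$ (compatible with the stated network) and all valid shuffle/reduce schemes, with the IVs modeled as i.i.d. uniform on $\mathbb{F}_{2^t}$. *)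

theory Defs
  imports Complex_Main
begin

(* An element of F_{2^t} is encoded as a natural
   number below 2^t (only the size 2^t of the alphabet matters, the IVs being
   i.i.d. uniform). *)

definition GC_MRG_conn ::
    "nat \<Rightarrow> nat \<Rightarrow> (nat \<Rightarrow> nat) \<Rightarrow> nat \<Rightarrow> (nat \<Rightarrow> nat set) \<Rightarrow> bool" where
  "GC_MRG_conn Lam r Kal K conn \<longleftrightarrow>
     (\<forall>U. U \<subseteq> {0..<Lam} \<and> 1 \<le> card U \<and> card U \<le> Lam - r \<longrightarrow>
        card {k\<in>{0..<K}. conn k = U} = Kal (card U))"

definition reduce_assignment :: "nat \<Rightarrow> nat \<Rightarrow> (nat \<Rightarrow> nat set) \<Rightarrow> bool" where
  "reduce_assignment K Q W \<longleftrightarrow>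
     (\<forall>k\<in>{0..<K}. W k \<subseteq> {0..<Q} \<and> card (W k) = Q div K) \<and>
     (\<forall>k\<in>{0..<K}. \<forall>k'\<in>{0..<K}. k \<noteq> k' \<longrightarrow> W k \<inter> W k' = {})"

definition map_assignment :: "nat \<Rightarrow> nat \<Rightarrow> nat \<Rightarrow> (nat \<Rightarrow> nat set) \<Rightarrow> bool" where
  "map_assignment Lam N r M \<longleftrightarrow>
     (\<forall>l\<in>{0..<Lam}. M l \<subseteq> {0..<N}) \<and>
     (\<forall>n\<in>{0..<N}. card {l\<in>{0..<Lam}. n \<in> M l} = r)"

definition accessible_files :: "nat \<Rightarrow> (nat \<Rightarrow> nat set) \<Rightarrow> (nat \<Rightarrow> nat set) \<Rightarrow> nat \<Rightarrow> nat set" where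
  "accessible_files Lam conn M k = (\<Union>l\<in>conn k \<inter> {0..<Lam}. M l)"

text \<open>All realizations of the IVs: v q n is the IV v_{q,n}, an element of a set of
  size 2^t; values outside the index range are normalised to 0.\<close>
definition IV_space :: "nat \<Rightarrow> nat \<Rightarrow> nat \<Rightarrow> (nat \<Rightarrow> nat \<Rightarrow> nat) set" where
  "IV_space Q N t = {v. \<forall>q n. v q n < 2 ^ t \<and> (\<not> (q < Q \<and> n < N) \<longrightarrow> v q n = 0)}"

definition restrict_IV :: "nat set \<Rightarrow> (nat \<Rightarrow> nat \<Rightarrow> nat) \<Rightarrow> nat \<Rightarrow> nat \<Rightarrow> nat" where
  "restrict_IV F v = (\<lambda>q n. if n \<in> F then v q n else 0)"

text \<open>A valid shuffle/reduce scheme: message X k (of l k bits, encoded as a number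
  below 2^(l k)) is a function of the IVs accessible to reducer k; every
  reducer k can decode (error-free, for every IV realization) all IVs v_{q,n}
  with q in W k from the other reducers' messages and its accessible IVs.\<close>
definition valid_scheme ::
    "nat \<Rightarrow> nat \<Rightarrow> nat \<Rightarrow> nat \<Rightarrow> nat \<Rightarrow> (nat \<Rightarrow> nat set) \<Rightarrow> (nat \<Rightarrow> nat set) \<Rightarrow> (nat \<Rightarrow> nat set)
     \<Rightarrow> (nat \<Rightarrow> (nat \<Rightarrow> nat \<Rightarrow> nat) \<Rightarrow> nat) \<Rightarrow> (nat \<Rightarrow> nat) \<Rightarrow> bool" where
  "valid_scheme Lam K Q N t conn M W X l \<longleftrightarrow>
     (\<forall>k\<in>{0..<K}. \<forall>v\<in>IV_space Q N t. X k v < 2 ^ l k) \<and>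
     (\<forall>k\<in>{0..<K}. \<forall>v\<in>IV_space Q N t. \<forall>v'\<in>IV_space Q N t.
        restrict_IV (accessible_files Lam conn M k) v =
        restrict_IV (accessible_files Lam conn M k) v' \<longrightarrow> X k v = X k v') \<and>
     (\<forall>k\<in>{0..<K}. \<exists>dec :: (nat \<Rightarrow> nat) \<Rightarrow> (nat \<Rightarrow> nat \<Rightarrow> nat) \<Rightarrow> nat \<Rightarrow> nat \<Rightarrow> nat.
        \<forall>v\<in>IV_space Q N t. \<forall>q\<in>W k. \<forall>n\<in>{0..<N}.
          dec (\<lambda>k'. if k' \<in> {0..<K} \<and> k' \<noteq> k then X k' v else 0)
              (restrict_IV (accessible_files Lam conn M k) v) q n = v q n)"

definition comm_load :: "nat \<Rightarrow> nat \<Rightarrow> nat \<Rightarrow> nat \<Rightarrow> (nat \<Rightarrow> nat) \<Rightarrow> real" where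
  "comm_load K Q N t l = real (\<Sum>k<K. l k) / (real Q * real N * real t)"

definition L_lb_new :: "nat \<Rightarrow> nat \<Rightarrow> (nat \<Rightarrow> nat) \<Rightarrow> nat \<Rightarrow> real" where
  "L_lb_new Lam r Kal K =
     real (\<Sum>a=1..Lam-r. Kal a * ((Lam - r) choose a)) /
     (real K * (\<Sum>a=1..Lam-r. real (Kal a) * (real (Lam choose a) - real ((Lam - r) choose a))))"

end

theory Submission
  imports Defs "HOL-Library.FuncSet"
begin

text \<open>For IVs uniform on the finite set of realizations, entropies are averages of logarithms of
  fiber sizes, so submodularity reduces to a double-counting inequality, and Han's inequality
  follows.  Let \<open>Y\<^sub>R\<close> be the IVs known to the reducers in \<open>R\<close> after the reduce phase
  (accessible or demanded).  Removing a reducer \<open>k\<close> from \<open>S\<close> and conditioning on its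
  accessible IVs reveals, by decodability, its \<open>Q t / K\<close> demanded IV bits of every file seen
  by no reducer outside \<open>S - {k}\<close>.  Averaging over \<open>k \<in> S\<close> with Han's inequality gives, by
  induction on \<open>card S\<close>, \<open>H(X\<^sub>S | Y\<^sub>R) \<ge> t (Q/K) \<Sum>\<^sub>n (card S - a n) / a n\<close> with \<open>R\<close> the
  complement of \<open>S\<close>, the sum over the files unseen by \<open>R\<close>, and \<open>a n\<close> the number of reducers
  in \<open>S\<close> accessing file \<open>n\<close>.  For \<open>S\<close> all reducers the left side is at most the total load.
  In the GC-MRG a file stored at \<open>r\<close> mappers is missed by exactly
  \<open>A = \<Sum>\<^sub>\<alpha> K\<^sub>\<alpha> (\<Lambda>-r choose \<alpha>)\<close> reducers, which yields \<open>L \<ge> A / (K (K - A))\<close>.\<close>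

section \<open>Entropy under the uniform distribution\<close>

definition fiber_card :: "'w set \<Rightarrow> ('w \<Rightarrow> 'a) \<Rightarrow> 'w \<Rightarrow> nat" where
  "fiber_card \<Omega> f w = card {w' \<in> \<Omega>. f w' = f w}"

text \<open>Shannon entropy (in nats) of \<open>f w\<close> for \<open>w\<close> uniformly distributed on the finite
  set \<open>\<Omega>\<close>: the value \<open>f w\<close> has probability \<open>fiber_card \<Omega> f w / card \<Omega>\<close>.\<close>
definition unif_entropy :: "'w set \<Rightarrow> ('w \<Rightarrow> 'a) \<Rightarrow> real" where
  "unif_entropy \<Omega> f =
     ln (real (card \<Omega>)) - (\<Sum>w\<in>\<Omega>. ln (real (fiber_card \<Omega> f w))) / real (card \<Omega>)"

definition unif_cond_entropy :: "'w set \<Rightarrow> ('w \<Rightarrow> 'a) \<Rightarrow> ('w \<Rightarrow> 'b) \<Rightarrow> real" where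
  "unif_cond_entropy \<Omega> f g = unif_entropy \<Omega> (\<lambda>w. (f w, g w)) - unif_entropy \<Omega> g"

definition joint :: "('i \<Rightarrow> 'w \<Rightarrow> 'b) \<Rightarrow> 'i set \<Rightarrow> 'w \<Rightarrow> 'i \<Rightarrow> 'b" where
  "joint Xs S w = restrict (\<lambda>k. Xs k w) S"

lemma joint_eqD: "joint Xs S a = joint Xs S b \<Longrightarrow> k \<in> S \<Longrightarrow> Xs k a = Xs k b"
  unfolding joint_def by (metis restrict_apply')

lemma fiber_card_pos: "finite \<Omega> \<Longrightarrow> w \<in> \<Omega> \<Longrightarrow> fiber_card \<Omega> f w > 0"
  unfolding fiber_card_def by (subst card_gt_0_iff) auto

lemma unif_entropy_cong:
  assumes "\<And>a b. a \<in> \<Omega> \<Longrightarrow> b \<in> \<Omega> \<Longrightarrow> f a = f b \<longleftrightarrow> g a = g b"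
  shows "unif_entropy \<Omega> f = unif_entropy \<Omega> g"
proof -
  have "fiber_card \<Omega> f w = fiber_card \<Omega> g w" if "w \<in> \<Omega>" for w
    unfolding fiber_card_def using assms that by (metis (no_types, lifting) Collect_cong)
  then show ?thesis
    unfolding unif_entropy_def by (simp cong: sum.cong)
qed

lemma unif_entropy_mono:
  assumes "finite \<Omega>" and "\<And>a b. a \<in> \<Omega> \<Longrightarrow> b \<in> \<Omega> \<Longrightarrow> f a = f b \<Longrightarrow> g a = g b"
  shows "unif_entropy \<Omega> g \<le> unif_entropy \<Omega> f"
proof -
  have "ln (real (fiber_card \<Omega> f w)) \<le> ln (real (fiber_card \<Omega> g w))" if w: "w \<in> \<Omega>" for w
  proof -
    have "{w' \<in> \<Omega>. f w' = f w} \<subseteq> {w' \<in> \<Omega>. g w' = g w}"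
      using assms(2) w by blast
    then have "fiber_card \<Omega> f w \<le> fiber_card \<Omega> g w"
      unfolding fiber_card_def using assms(1) by (simp add: card_mono)
    then show ?thesis using fiber_card_pos[OF assms(1) w, of f] by simp
  qed
  then have "(\<Sum>w\<in>\<Omega>. ln (real (fiber_card \<Omega> f w))) \<le> (\<Sum>w\<in>\<Omega>. ln (real (fiber_card \<Omega> g w)))"
    by (rule sum_mono)
  then show ?thesis
    unfolding unif_entropy_def by (simp add: divide_right_mono)
qed

lemma unif_entropy_const: "unif_entropy \<Omega> (\<lambda>w. c) = 0"
  unfolding unif_entropy_def fiber_card_def by simp

lemma unif_entropy_eq_if_fiber_card_const:
  assumes "\<And>w. w \<in> \<Omega> \<Longrightarrow> fiber_card \<Omega> f w = c" and "\<Omega> \<noteq> {}" and "finite \<Omega>"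
  shows "unif_entropy \<Omega> f = ln (real (card \<Omega>)) - ln (real c)"
  using assms unfolding unif_entropy_def by simp

lemma sum_inverse_fiber_card:
  assumes "finite \<Omega>"
  shows "(\<Sum>w\<in>\<Omega>. 1 / real (fiber_card \<Omega> f w)) = real (card (f ` \<Omega>))"
proof -
  have "(\<Sum>w\<in>\<Omega>. 1 / real (fiber_card \<Omega> f w)) =
        (\<Sum>y\<in>f ` \<Omega>. \<Sum>w\<in>{w\<in>\<Omega>. f w = y}. 1 / real (fiber_card \<Omega> f w))"
    using assms by (rule sum.image_gen)
  also have "\<dots> = (\<Sum>y\<in>f ` \<Omega>. 1)"
  proof (rule sum.cong[OF refl])
    fix y assume "y \<in> f ` \<Omega>"
    then have "card {w\<in>\<Omega>. f w = y} > 0" using assms by (auto simp: card_gt_0_iff)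
    moreover have "fiber_card \<Omega> f w = card {w\<in>\<Omega>. f w = y}" if "w \<in> {w\<in>\<Omega>. f w = y}" for w
      using that unfolding fiber_card_def by auto
    ultimately show "(\<Sum>w\<in>{w\<in>\<Omega>. f w = y}. 1 / real (fiber_card \<Omega> f w)) = 1"
      by simp
  qed
  finally show ?thesis by simp
qed

text \<open>Gibbs' inequality \<open>ln x \<le> x - 1\<close> applied to \<open>x = card \<Omega> / (card (f ` \<Omega>) * fiber_card)\<close>,
  whose average is \<open>1\<close> by \<open>sum_inverse_fiber_card\<close>.\<close>
lemma unif_entropy_le_ln_card:
  assumes "finite \<Omega>" "f ` \<Omega> \<subseteq> V" "finite V"
  shows "unif_entropy \<Omega> f \<le> ln (real (card V))"
proof (cases "\<Omega> = {}")
  case True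
  then show ?thesis by (cases "card V = 0") (auto simp: unif_entropy_def)
next
  case False
  define n where "n = real (card \<Omega>)"
  define m where "m = real (card (f ` \<Omega>))"
  have n: "n > 0" using False assms unfolding n_def by (simp add: card_gt_0_iff)
  have m: "m > 0" using False assms unfolding m_def by (simp add: card_gt_0_iff)
  have c: "real (fiber_card \<Omega> f w) > 0" if "w \<in> \<Omega>" for w
    using fiber_card_pos[OF assms(1) that] by simp
  have "unif_entropy \<Omega> f - ln m = (\<Sum>w\<in>\<Omega>. ln (n / (m * real (fiber_card \<Omega> f w)))) / n"
  proof -
    have "(\<Sum>w\<in>\<Omega>. ln (n / (m * real (fiber_card \<Omega> f w))))
        = (\<Sum>w\<in>\<Omega>. ln n - ln m - ln (real (fiber_card \<Omega> f w)))"
      using c n m by (intro sum.cong) (auto simp: ln_div ln_mult)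
    also have "\<dots> = n * ln n - n * ln m - (\<Sum>w\<in>\<Omega>. ln (real (fiber_card \<Omega> f w)))"
      by (simp add: sum_subtractf n_def sum.distrib algebra_simps)
    finally show ?thesis
      unfolding unif_entropy_def n_def[symmetric] using n by (simp add: field_simps)
  qed
  also have "\<dots> \<le> (\<Sum>w\<in>\<Omega>. n / (m * real (fiber_card \<Omega> f w)) - 1) / n"
    using n c m by (intro divide_right_mono sum_mono ln_le_minus_one) auto
  also have "\<dots> = ((n / m) * (\<Sum>w\<in>\<Omega>. 1 / real (fiber_card \<Omega> f w)) - n) / n"
    by (simp add: sum_subtractf sum_distrib_left n_def)
  also have "\<dots> = 0"
    unfolding sum_inverse_fiber_card[OF assms(1)] m_def[symmetric] using m n by simp
  finally have "unif_entropy \<Omega> f \<le> ln m" by simp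
  also have "\<dots> \<le> ln (real (card V))"
    using m card_mono[OF assms(3,2)] unfolding m_def by simp
  finally show ?thesis .
qed

lemma sum_inverse_triple_fiber_le:
  assumes fin: "finite \<Omega>" and a: "a \<in> \<Omega>"
  shows "(\<Sum>w\<in>\<Omega>. if f w = f a \<and> g w = g a \<and> g w = g b \<and> h w = h b
            then 1 / (real (fiber_card \<Omega> (\<lambda>w. (f w, g w, h w)) w) * real (fiber_card \<Omega> g w))
            else 0)
         \<le> (if g a = g b then 1 / real (fiber_card \<Omega> g a) else 0)"
proof -
  define E where "E = {w\<in>\<Omega>. f w = f a \<and> g w = g a \<and> g w = g b \<and> h w = h b}"
  have "finite E" using fin unfolding E_def by simp
  have sum_E: "(\<Sum>w\<in>\<Omega>. if f w = f a \<and> g w = g a \<and> g w = g b \<and> h w = h b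
            then 1 / (real (fiber_card \<Omega> (\<lambda>w. (f w, g w, h w)) w) * real (fiber_card \<Omega> g w))
            else 0)
      = (\<Sum>w\<in>E. 1 / (real (fiber_card \<Omega> (\<lambda>w. (f w, g w, h w)) w) * real (fiber_card \<Omega> g w)))"
    unfolding E_def using fin by (simp add: sum.If_cases Int_def)
  show ?thesis
  proof (cases "E = {}")
    case True
    then show ?thesis unfolding sum_E by simp
  next
    case False
    then have gab: "g a = g b" unfolding E_def by auto
    have "fiber_card \<Omega> (\<lambda>w. (f w, g w, h w)) w = card E \<and> fiber_card \<Omega> g w = fiber_card \<Omega> g a"
      if "w \<in> E" for w
      using that unfolding fiber_card_def E_def by (auto intro!: arg_cong[where f = card])
    then have "(\<Sum>w\<in>E. 1 / (real (fiber_card \<Omega> (\<lambda>w. (f w, g w, h w)) w) * real (fiber_card \<Omega> g w)))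
        = (\<Sum>w\<in>E. 1 / (real (card E) * real (fiber_card \<Omega> g a)))"
      by (intro sum.cong) auto
    also have "\<dots> = 1 / real (fiber_card \<Omega> g a)"
      using False \<open>finite E\<close> by (simp add: card_gt_0_iff)
    finally show ?thesis unfolding sum_E using gab by simp
  qed
qed

text \<open>Double counting: both \<open>fiber_card (f, g)\<close> and \<open>fiber_card (g, h)\<close> count
  points, so the summand counts pairs \<open>(a, b)\<close> with \<open>g a = g b\<close>, each pair with total
  weight at most \<open>1 / fiber_card g a\<close>.\<close>
lemma sum_fiber_card_ratio_le_card:
  fixes f :: "'w \<Rightarrow> 'a" and g :: "'w \<Rightarrow> 'b" and h :: "'w \<Rightarrow> 'c"
  assumes fin: "finite \<Omega>"
  shows "(\<Sum>w\<in>\<Omega>. real (fiber_card \<Omega> (\<lambda>w. (f w, g w)) w) * real (fiber_card \<Omega> (\<lambda>w. (g w, h w)) w)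
            / (real (fiber_card \<Omega> (\<lambda>w. (f w, g w, h w)) w) * real (fiber_card \<Omega> g w)))
         \<le> real (card \<Omega>)"
proof -
  define c where "c w = real (fiber_card \<Omega> (\<lambda>w. (f w, g w, h w)) w) * real (fiber_card \<Omega> g w)" for w
  define P where "P w p \<longleftrightarrow> f w = f (fst p) \<and> g w = g (fst p) \<and> g w = g (snd p) \<and> h w = h (snd p)"
    for w p
  have "real (fiber_card \<Omega> (\<lambda>w. (f w, g w)) w) * real (fiber_card \<Omega> (\<lambda>w. (g w, h w)) w) / c w
      = (\<Sum>p\<in>\<Omega> \<times> \<Omega>. if P w p then 1 / c w else 0)" for w
  proof -
    have "{p \<in> \<Omega> \<times> \<Omega>. P w p}
        = {a\<in>\<Omega>. (f a, g a) = (f w, g w)} \<times> {b\<in>\<Omega>. (g b, h b) = (g w, h w)}"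
      unfolding P_def by auto
    then show ?thesis
      using fin by (simp add: sum.If_cases Int_def fiber_card_def card_cartesian_product)
  qed
  then have "(\<Sum>w\<in>\<Omega>. real (fiber_card \<Omega> (\<lambda>w. (f w, g w)) w) * real (fiber_card \<Omega> (\<lambda>w. (g w, h w)) w) / c w)
      = (\<Sum>w\<in>\<Omega>. \<Sum>p\<in>\<Omega> \<times> \<Omega>. if P w p then 1 / c w else 0)"
    by simp
  also have "\<dots> = (\<Sum>p\<in>\<Omega> \<times> \<Omega>. \<Sum>w\<in>\<Omega>. if P w p then 1 / c w else 0)"
    by (rule sum.swap)
  also have "\<dots> \<le> (\<Sum>p\<in>\<Omega> \<times> \<Omega>. if g (fst p) = g (snd p) then 1 / real (fiber_card \<Omega> g (fst p)) else 0)"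
    unfolding P_def c_def using fin by (intro sum_mono sum_inverse_triple_fiber_le) auto
  also have "\<dots> = (\<Sum>a\<in>\<Omega>. \<Sum>b\<in>\<Omega>. if g a = g b then 1 / real (fiber_card \<Omega> g a) else 0)"
    by (simp add: sum.cartesian_product case_prod_beta)
  also have "\<dots> = (\<Sum>a\<in>\<Omega>. 1)"
  proof (rule sum.cong[OF refl])
    fix a assume "a \<in> \<Omega>"
    have "(\<Sum>b\<in>\<Omega>. if g a = g b then 1 / real (fiber_card \<Omega> g a) else 0)
        = (\<Sum>b\<in>{b\<in>\<Omega>. g b = g a}. 1 / real (fiber_card \<Omega> g a))"
      using fin by (simp add: sum.If_cases Int_def eq_commute)
    also have "\<dots> = real (fiber_card \<Omega> g a) * (1 / real (fiber_card \<Omega> g a))"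
      by (simp add: fiber_card_def)
    finally show "(\<Sum>b\<in>\<Omega>. if g a = g b then 1 / real (fiber_card \<Omega> g a) else 0) = 1"
      using fiber_card_pos[OF fin \<open>a \<in> \<Omega>\<close>, of g] by simp
  qed
  finally show ?thesis unfolding c_def by simp
qed

lemma unif_entropy_submodular:
  fixes f :: "'w \<Rightarrow> 'a" and g :: "'w \<Rightarrow> 'b" and h :: "'w \<Rightarrow> 'c"
  assumes fin: "finite \<Omega>"
  shows "unif_entropy \<Omega> (\<lambda>w. (f w, g w, h w)) + unif_entropy \<Omega> g
         \<le> unif_entropy \<Omega> (\<lambda>w. (f w, g w)) + unif_entropy \<Omega> (\<lambda>w. (g w, h w))"
proof -
  define c1 where "c1 w = real (fiber_card \<Omega> (\<lambda>w. (f w, g w, h w)) w)" for w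
  define c2 where "c2 w = real (fiber_card \<Omega> g w)" for w
  define c3 where "c3 w = real (fiber_card \<Omega> (\<lambda>w. (f w, g w)) w)" for w
  define c4 where "c4 w = real (fiber_card \<Omega> (\<lambda>w. (g w, h w)) w)" for w
  have pos: "c1 w > 0" "c2 w > 0" "c3 w > 0" "c4 w > 0" if "w \<in> \<Omega>" for w
    unfolding c1_def c2_def c3_def c4_def using fiber_card_pos[OF fin that] by simp_all
  have "(\<Sum>w\<in>\<Omega>. ln (c3 w) + ln (c4 w) - ln (c1 w) - ln (c2 w))
      = (\<Sum>w\<in>\<Omega>. ln (c3 w * c4 w / (c1 w * c2 w)))"
  proof (rule sum.cong[OF refl])
    fix w assume "w \<in> \<Omega>"
    then show "ln (c3 w) + ln (c4 w) - ln (c1 w) - ln (c2 w) = ln (c3 w * c4 w / (c1 w * c2 w))"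
      using pos[OF \<open>w \<in> \<Omega>\<close>] by (simp add: ln_div ln_mult)
  qed
  also have "\<dots> \<le> (\<Sum>w\<in>\<Omega>. c3 w * c4 w / (c1 w * c2 w) - 1)"
    using pos by (intro sum_mono ln_le_minus_one) auto
  also have "\<dots> \<le> 0"
    using sum_fiber_card_ratio_le_card[OF fin, of f g h]
    unfolding c1_def c2_def c3_def c4_def by (simp add: sum_subtractf)
  finally have "(\<Sum>w\<in>\<Omega>. ln (c3 w)) + (\<Sum>w\<in>\<Omega>. ln (c4 w))
      \<le> (\<Sum>w\<in>\<Omega>. ln (c1 w)) + (\<Sum>w\<in>\<Omega>. ln (c2 w))"
    by (simp add: sum_subtractf sum.distrib)
  then have "((\<Sum>w\<in>\<Omega>. ln (c3 w)) + (\<Sum>w\<in>\<Omega>. ln (c4 w))) / real (card \<Omega>)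
      \<le> ((\<Sum>w\<in>\<Omega>. ln (c1 w)) + (\<Sum>w\<in>\<Omega>. ln (c2 w))) / real (card \<Omega>)"
    by (rule divide_right_mono) simp
  then show ?thesis
    unfolding unif_entropy_def c1_def[symmetric] c2_def[symmetric] c3_def[symmetric] c4_def[symmetric]
    by (simp add: add_divide_distrib)
qed

lemma unif_cond_entropy_nonneg: "finite \<Omega> \<Longrightarrow> unif_cond_entropy \<Omega> f g \<ge> 0"
  unfolding unif_cond_entropy_def using unif_entropy_mono[of \<Omega> "\<lambda>w. (f w, g w)" g] by auto

lemma unif_cond_entropy_conditioning_le:
  "finite \<Omega> \<Longrightarrow> unif_cond_entropy \<Omega> f (\<lambda>w. (g w, h w)) \<le> unif_cond_entropy \<Omega> f g"
  using unif_entropy_submodular[of \<Omega> f g h] unfolding unif_cond_entropy_def by simp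

lemma unif_cond_entropy_joint_le_sum:
  assumes fin: "finite \<Omega>" and S: "finite S"
  shows "unif_cond_entropy \<Omega> (joint Xs S) Z \<le> (\<Sum>k\<in>S. unif_cond_entropy \<Omega> (Xs k) Z)"
  using S
proof (induction S rule: finite_induct)
  case empty
  have "unif_entropy \<Omega> (\<lambda>w. (joint Xs {} w, Z w)) = unif_entropy \<Omega> Z"
    by (rule unif_entropy_cong) (auto simp: joint_def)
  then show ?case unfolding unif_cond_entropy_def by simp
next
  case (insert k S)
  have "unif_entropy \<Omega> (\<lambda>w. (joint Xs (insert k S) w, Z w))
      = unif_entropy \<Omega> (\<lambda>w. (Xs k w, Z w, joint Xs S w))"
    using insert(2) by (intro unif_entropy_cong) (auto simp: joint_def restrict_def fun_eq_iff)
  moreover have "unif_entropy \<Omega> (\<lambda>w. (joint Xs S w, Z w)) = unif_entropy \<Omega> (\<lambda>w. (Z w, joint Xs S w))"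
    by (rule unif_entropy_cong) auto
  ultimately have "unif_cond_entropy \<Omega> (joint Xs (insert k S)) Z
      \<le> unif_cond_entropy \<Omega> (Xs k) Z + unif_cond_entropy \<Omega> (joint Xs S) Z"
    using unif_entropy_submodular[OF fin, of "Xs k" Z "joint Xs S"]
    unfolding unif_cond_entropy_def by simp
  then show ?case using insert by simp
qed

lemma han_inequality:
  assumes fin: "finite \<Omega>" and S: "finite S"
  shows "(\<Sum>k\<in>S. unif_cond_entropy \<Omega> (joint Xs (S - {k})) (\<lambda>w. (Xs k w, Z w)))
         \<le> (real (card S) - 1) * unif_cond_entropy \<Omega> (joint Xs S) Z"
proof -
  have "unif_cond_entropy \<Omega> (joint Xs (S - {k})) (\<lambda>w. (Xs k w, Z w))
      = unif_entropy \<Omega> (\<lambda>w. (joint Xs S w, Z w)) - unif_entropy \<Omega> (\<lambda>w. (Xs k w, Z w))"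
    if k: "k \<in> S" for k
  proof -
    have "unif_entropy \<Omega> (\<lambda>w. (joint Xs (S - {k}) w, Xs k w, Z w))
        = unif_entropy \<Omega> (\<lambda>w. (joint Xs S w, Z w))"
      using k by (intro unif_entropy_cong) (auto simp: joint_def restrict_def fun_eq_iff)
    then show ?thesis unfolding unif_cond_entropy_def by simp
  qed
  then have "(\<Sum>k\<in>S. unif_cond_entropy \<Omega> (joint Xs (S - {k})) (\<lambda>w. (Xs k w, Z w)))
       = real (card S) * unif_entropy \<Omega> (\<lambda>w. (joint Xs S w, Z w))
         - (\<Sum>k\<in>S. unif_entropy \<Omega> (\<lambda>w. (Xs k w, Z w)))"
    by (simp add: sum_subtractf)
  moreover have "(\<Sum>k\<in>S. unif_cond_entropy \<Omega> (Xs k) Z)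
      = (\<Sum>k\<in>S. unif_entropy \<Omega> (\<lambda>w. (Xs k w, Z w))) - real (card S) * unif_entropy \<Omega> Z"
    unfolding unif_cond_entropy_def by (simp add: sum_subtractf)
  ultimately show ?thesis
    using unif_cond_entropy_joint_le_sum[OF fin S, of Xs Z]
    unfolding unif_cond_entropy_def by (simp add: algebra_simps)
qed

section \<open>Projections of the intermediate values\<close>

definition proj_IV :: "(nat \<times> nat) set \<Rightarrow> (nat \<Rightarrow> nat \<Rightarrow> nat) \<Rightarrow> nat \<times> nat \<Rightarrow> nat" where
  "proj_IV C v = (\<lambda>p. if p \<in> C then v (fst p) (snd p) else 0)"

lemma proj_IV_eq_iff:
  "proj_IV C v = proj_IV C v' \<longleftrightarrow> (\<forall>(q, n)\<in>C. v q n = v' q n)"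
  unfolding proj_IV_def fun_eq_iff by auto

lemma proj_IV_Un_eq_iff:
  "proj_IV (A \<union> B) v = proj_IV (A \<union> B) v' \<longleftrightarrow> proj_IV A v = proj_IV A v' \<and> proj_IV B v = proj_IV B v'"
  unfolding proj_IV_eq_iff by blast

lemma proj_IV_eq_subset:
  "A \<subseteq> B \<Longrightarrow> proj_IV B v = proj_IV B v' \<Longrightarrow> proj_IV A v = proj_IV A v'"
  unfolding proj_IV_eq_iff by blast

lemma bij_betw_IV_proj_fiber:
  assumes C: "C \<subseteq> {0..<Q} \<times> {0..<N}" and v0: "v0 \<in> IV_space Q N t"
  shows "bij_betw (\<lambda>v. restrict (\<lambda>p. v (fst p) (snd p)) ({0..<Q} \<times> {0..<N} - C))
           {v \<in> IV_space Q N t. proj_IV C v = proj_IV C v0}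
           (({0..<Q} \<times> {0..<N} - C) \<rightarrow>\<^sub>E {..<2 ^ t})"
    (is "bij_betw ?\<phi> ?F ?B")
proof (rule bij_betw_byWitness)
  define \<psi> where "\<psi> g = (\<lambda>q n. if (q, n) \<in> C then v0 q n
      else if (q, n) \<in> {0..<Q} \<times> {0..<N} then g (q, n) else 0)" for g :: "nat \<times> nat \<Rightarrow> nat"
  have v0_range: "v0 q n < 2 ^ t" "\<not> (q < Q \<and> n < N) \<Longrightarrow> v0 q n = 0" for q n
    using v0 unfolding IV_space_def by auto
  show "\<forall>v\<in>?F. \<psi> (?\<phi> v) = v"
    unfolding \<psi>_def IV_space_def proj_IV_eq_iff by (fastforce simp: fun_eq_iff)
  show "\<forall>g\<in>?B. ?\<phi> (\<psi> g) = g"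
    unfolding \<psi>_def by (auto simp: fun_eq_iff PiE_def extensional_def)
  show "?\<phi> ` ?F \<subseteq> ?B"
    unfolding image_subset_iff restrict_PiE_iff IV_space_def by auto
  show "\<psi> ` ?B \<subseteq> ?F"
    using C v0_range unfolding \<psi>_def IV_space_def proj_IV_eq_iff by (auto simp: PiE_def Pi_def)
qed

lemma card_IV_proj_fiber:
  assumes "C \<subseteq> {0..<Q} \<times> {0..<N}" and "v0 \<in> IV_space Q N t"
  shows "finite {v \<in> IV_space Q N t. proj_IV C v = proj_IV C v0}"
    and "card {v \<in> IV_space Q N t. proj_IV C v = proj_IV C v0} = (2 ^ t) ^ card ({0..<Q} \<times> {0..<N} - C)"
  using bij_betw_finite[OF bij_betw_IV_proj_fiber[OF assms]]
    bij_betw_same_card[OF bij_betw_IV_proj_fiber[OF assms]]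
  by (simp_all add: finite_PiE card_PiE)

lemma zero_in_IV_space: "(\<lambda>q n. 0) \<in> IV_space Q N t"
  unfolding IV_space_def by auto

lemma finite_IV_space: "finite (IV_space Q N t)"
  and card_IV_space: "card (IV_space Q N t) = (2 ^ t) ^ (Q * N)"
  using card_IV_proj_fiber[of "{}" Q N "\<lambda>q n. 0" t] zero_in_IV_space
  by (simp_all add: proj_IV_def)

lemma unif_entropy_proj_IV:
  assumes C: "C \<subseteq> {0..<Q} \<times> {0..<N}"
  shows "unif_entropy (IV_space Q N t) (proj_IV C) = real t * real (card C) * ln 2"
proof -
  have card_C: "card ({0..<Q} \<times> {0..<N} - C) = Q * N - card C" "card C \<le> Q * N"
    using C card_mono[OF _ C] by (simp_all add: card_Diff_subset finite_subset)
  have "unif_entropy (IV_space Q N t) (proj_IV C)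
      = ln (real ((2 ^ t) ^ (Q * N))) - ln (real ((2 ^ t) ^ card ({0..<Q} \<times> {0..<N} - C)))"
  proof (subst unif_entropy_eq_if_fiber_card_const)
    show "fiber_card (IV_space Q N t) (proj_IV C) v = (2 ^ t) ^ card ({0..<Q} \<times> {0..<N} - C)"
      if "v \<in> IV_space Q N t" for v
      unfolding fiber_card_def by (rule card_IV_proj_fiber(2)[OF C that])
  qed (use zero_in_IV_space[of Q N t] finite_IV_space card_IV_space in auto)
  also have "\<dots> = real t * real (Q * N) * ln 2 - real t * real (Q * N - card C) * ln 2"
    unfolding card_C by (simp add: ln_realpow power_mult[symmetric] mult.commute)
  finally show ?thesis using card_C(2) by (simp add: of_nat_diff algebra_simps)
qed

section \<open>Counting in the GC-MRG\<close>

lemma sum_subsets_by_card: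
  fixes g :: "nat \<Rightarrow> nat"
  assumes "finite A"
  shows "(\<Sum>U\<in>{U. U \<subseteq> A \<and> 1 \<le> card U \<and> card U \<le> m}. g (card U))
       = (\<Sum>a=1..m. g a * (card A choose a))"
proof -
  have "{U. U \<subseteq> A \<and> 1 \<le> card U \<and> card U \<le> m} = (\<Union>a\<in>{1..m}. {U. U \<subseteq> A \<and> card U = a})"
    by auto
  then have "(\<Sum>U\<in>{U. U \<subseteq> A \<and> 1 \<le> card U \<and> card U \<le> m}. g (card U))
      = (\<Sum>a\<in>{1..m}. \<Sum>U\<in>{U. U \<subseteq> A \<and> card U = a}. g (card U))"
    using assms by (simp only:) (rule sum.UNION_disjoint, auto)
  also have "\<dots> = (\<Sum>a\<in>{1..m}. g a * card {U. U \<subseteq> A \<and> card U = a})"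
    by (intro sum.cong) auto
  finally show ?thesis using n_subsets[OF assms] by simp
qed

lemma GC_MRG_card_conn_in:
  assumes gc: "GC_MRG_conn Lam r Kal K conn"
    and G: "G \<subseteq> {U. U \<subseteq> {0..<Lam} \<and> 1 \<le> card U \<and> card U \<le> Lam - r}"
  shows "card {k\<in>{0..<K}. conn k \<in> G} = (\<Sum>U\<in>G. Kal (card U))"
proof -
  have "finite G" using G by (rule finite_subset) auto
  have "{k\<in>{0..<K}. conn k \<in> G} = (\<Union>U\<in>G. {k\<in>{0..<K}. conn k = U})" by auto
  then have "card {k\<in>{0..<K}. conn k \<in> G} = (\<Sum>U\<in>G. card {k\<in>{0..<K}. conn k = U})"
    using \<open>finite G\<close> by (simp only:) (rule card_UN_disjoint, auto)
  also have "\<dots> = (\<Sum>U\<in>G. Kal (card U))"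
    using G gc unfolding GC_MRG_conn_def by (intro sum.cong) auto
  finally show ?thesis .
qed

text \<open>The reducers counted by \<open>GC_MRG_conn\<close> already exhaust all \<open>K\<close> reducers, so
  every reducer is connected to an admissible set of mappers.\<close>
lemma GC_MRG_conn_admissible:
  assumes gc: "GC_MRG_conn Lam r Kal K conn"
    and K: "K = (\<Sum>a=1..Lam-r. Kal a * (Lam choose a))"
    and k: "k < K"
  shows "conn k \<subseteq> {0..<Lam} \<and> 1 \<le> card (conn k) \<and> card (conn k) \<le> Lam - r"
proof -
  define G where "G = {U. U \<subseteq> {0..<Lam} \<and> 1 \<le> card U \<and> card U \<le> Lam - r}"
  have card_eq: "card {k\<in>{0..<K}. conn k \<in> G} = card {0..<K}"
    using GC_MRG_card_conn_in[OF gc, of G] sum_subsets_by_card[of "{0..<Lam}" Kal "Lam - r"]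
    unfolding G_def K by simp
  have "{k\<in>{0..<K}. conn k \<in> G} = {0..<K}"
    by (rule card_subset_eq[OF _ _ card_eq]) auto
  then have "k \<in> {k\<in>{0..<K}. conn k \<in> G}" using k by simp
  then show ?thesis unfolding G_def by simp
qed

lemma GC_MRG_card_conn_disjoint:
  assumes gc: "GC_MRG_conn Lam r Kal K conn"
    and K: "K = (\<Sum>a=1..Lam-r. Kal a * (Lam choose a))"
    and S: "S \<subseteq> {0..<Lam}" "card S = r"
  shows "card {k\<in>{0..<K}. conn k \<inter> S = {}} = (\<Sum>a=1..Lam-r. Kal a * ((Lam - r) choose a))"
proof -
  define G where "G = {U. U \<subseteq> {0..<Lam} - S \<and> 1 \<le> card U \<and> card U \<le> Lam - r}"
  have "{k\<in>{0..<K}. conn k \<inter> S = {}} = {k\<in>{0..<K}. conn k \<in> G}"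
    using GC_MRG_conn_admissible[OF gc K] unfolding G_def by auto
  then have "card {k\<in>{0..<K}. conn k \<inter> S = {}} = (\<Sum>U\<in>G. Kal (card U))"
    using GC_MRG_card_conn_in[OF gc, of G] unfolding G_def by auto
  also have "\<dots> = (\<Sum>a=1..Lam-r. Kal a * (card ({0..<Lam} - S) choose a))"
    unfolding G_def by (rule sum_subsets_by_card) simp
  also have "card ({0..<Lam} - S) = Lam - r"
    using S by (simp add: card_Diff_subset finite_subset)
  finally show ?thesis .
qed

lemma GC_MRG_card_no_access:
  assumes gc: "GC_MRG_conn Lam r Kal K conn"
    and K: "K = (\<Sum>a=1..Lam-r. Kal a * (Lam choose a))"
    and map: "map_assignment Lam N r M" and n: "n < N"
  shows "card {k\<in>{0..<K}. n \<notin> accessible_files Lam conn M k}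
       = (\<Sum>a=1..Lam-r. Kal a * ((Lam - r) choose a))"
proof -
  define S where "S = {i\<in>{0..<Lam}. n \<in> M i}"
  have S: "S \<subseteq> {0..<Lam}" "card S = r"
    using map n unfolding map_assignment_def S_def by auto
  have "{k\<in>{0..<K}. n \<notin> accessible_files Lam conn M k} = {k\<in>{0..<K}. conn k \<inter> S = {}}"
    unfolding accessible_files_def S_def by auto
  then show ?thesis
    using GC_MRG_card_conn_disjoint[OF gc K S] by simp
qed

section \<open>The converse for a fixed scheme\<close>

locale madc_scheme =
  fixes Lam K N Q t :: nat
    and conn M W :: "nat \<Rightarrow> nat set"
    and X :: "nat \<Rightarrow> (nat \<Rightarrow> nat \<Rightarrow> nat) \<Rightarrow> nat"
    and l :: "nat \<Rightarrow> nat"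
  assumes mapper_files: "\<And>i. i < Lam \<Longrightarrow> M i \<subseteq> {0..<N}"
    and reduce: "reduce_assignment K Q W"
    and valid: "valid_scheme Lam K Q N t conn M W X l"
begin

abbreviation "\<Omega> \<equiv> IV_space Q N t"
abbreviation "Acc k \<equiv> accessible_files Lam conn M k"

definition acc_IVs :: "nat \<Rightarrow> (nat \<times> nat) set" where
  "acc_IVs k = {0..<Q} \<times> Acc k"

text \<open>The IVs known to the reducers in \<open>R\<close> after the reduce phase, i.e.\ the paper's
  \<open>Y\<^sub>R\<close>: their accessible IVs and the IVs they demand.\<close>
definition known_IVs :: "nat set \<Rightarrow> (nat \<times> nat) set" where
  "known_IVs R = (\<Union>k\<in>R. acc_IVs k \<union> W k \<times> {0..<N})"

definition acc_files_of :: "nat set \<Rightarrow> nat set" where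
  "acc_files_of R = (\<Union>k\<in>R. Acc k)"

lemma accessible_files_subset: "Acc k \<subseteq> {0..<N}"
  unfolding accessible_files_def by (rule UN_least) (use mapper_files in auto)

lemma W_subset: "k < K \<Longrightarrow> W k \<subseteq> {0..<Q}"
  and card_W: "k < K \<Longrightarrow> card (W k) = Q div K"
  and W_disjoint: "k < K \<Longrightarrow> k' < K \<Longrightarrow> k \<noteq> k' \<Longrightarrow> W k \<inter> W k' = {}"
  using reduce unfolding reduce_assignment_def by auto

lemma acc_IVs_subset: "acc_IVs k \<subseteq> {0..<Q} \<times> {0..<N}"
  unfolding acc_IVs_def using accessible_files_subset by auto

lemma known_IVs_subset: "R \<subseteq> {0..<K} \<Longrightarrow> known_IVs R \<subseteq> {0..<Q} \<times> {0..<N}"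
  unfolding known_IVs_def using acc_IVs_subset W_subset by fastforce

lemma known_IVs_insert: "known_IVs (insert k R) = acc_IVs k \<union> W k \<times> {0..<N} \<union> known_IVs R"
  unfolding known_IVs_def by auto

lemma message_lt: "k < K \<Longrightarrow> v \<in> \<Omega> \<Longrightarrow> X k v < 2 ^ l k"
  using conjunct1[OF valid[unfolded valid_scheme_def]] by (meson atLeastLessThan_iff zero_le)

lemma message_local:
  assumes "k < K" "v \<in> \<Omega>" "v' \<in> \<Omega>" "restrict_IV (Acc k) v = restrict_IV (Acc k) v'"
  shows "X k v = X k v'"
  using conjunct1[OF conjunct2[OF valid[unfolded valid_scheme_def]]] assms
  by (meson atLeastLessThan_iff zero_le)

lemma decodable:
  assumes "k < K"
  shows "\<exists>dec :: (nat \<Rightarrow> nat) \<Rightarrow> (nat \<Rightarrow> nat \<Rightarrow> nat) \<Rightarrow> nat \<Rightarrow> nat \<Rightarrow> nat.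
     \<forall>v\<in>\<Omega>. \<forall>q\<in>W k. \<forall>n\<in>{0..<N}.
       dec (\<lambda>k'. if k' \<in> {0..<K} \<and> k' \<noteq> k then X k' v else 0) (restrict_IV (Acc k) v) q n = v q n"
  using assms by (intro bspec[OF conjunct2[OF conjunct2[OF valid[unfolded valid_scheme_def]]]]) simp

lemma restrict_IV_eq_if_proj_IV_eq:
  assumes v: "v \<in> \<Omega>" "v' \<in> \<Omega>" and eq: "proj_IV (acc_IVs k) v = proj_IV (acc_IVs k) v'"
  shows "restrict_IV (Acc k) v = restrict_IV (Acc k) v'"
proof (intro ext)
  fix q n
  consider "(q, n) \<in> acc_IVs k" | "n \<notin> Acc k" | "\<not> q < Q"
    unfolding acc_IVs_def by fastforce
  then show "restrict_IV (Acc k) v q n = restrict_IV (Acc k) v' q n"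
  proof cases
    case 1
    then show ?thesis using eq unfolding proj_IV_eq_iff restrict_IV_def by auto
  next
    case 2
    then show ?thesis unfolding restrict_IV_def by simp
  next
    case 3
    then show ?thesis using v unfolding restrict_IV_def IV_space_def by simp
  qed
qed

lemma message_eq:
  assumes k: "k < K" and v: "v \<in> \<Omega>" "v' \<in> \<Omega>"
    and eq: "proj_IV (acc_IVs k) v = proj_IV (acc_IVs k) v'"
  shows "X k v = X k v'"
  using message_local[OF k v restrict_IV_eq_if_proj_IV_eq[OF v eq]] .

lemma demanded_IVs_eq:
  assumes k: "k < K" and v: "v \<in> \<Omega>" "v' \<in> \<Omega>"
    and msgs: "\<And>k'. k' < K \<Longrightarrow> k' \<noteq> k \<Longrightarrow> X k' v = X k' v'"
    and eq: "proj_IV (acc_IVs k) v = proj_IV (acc_IVs k) v'"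
  shows "proj_IV (W k \<times> {0..<N}) v = proj_IV (W k \<times> {0..<N}) v'"
proof -
  obtain dec :: "(nat \<Rightarrow> nat) \<Rightarrow> (nat \<Rightarrow> nat \<Rightarrow> nat) \<Rightarrow> nat \<Rightarrow> nat \<Rightarrow> nat" where
    dec: "\<forall>v\<in>\<Omega>. \<forall>q\<in>W k. \<forall>n\<in>{0..<N}.
      dec (\<lambda>k'. if k' \<in> {0..<K} \<and> k' \<noteq> k then X k' v else 0) (restrict_IV (Acc k) v) q n = v q n"
    using decodable[OF k] by blast
  have "restrict_IV (Acc k) v = restrict_IV (Acc k) v'"
    using restrict_IV_eq_if_proj_IV_eq[OF v eq] .
  moreover have "(\<lambda>k'. if k' \<in> {0..<K} \<and> k' \<noteq> k then X k' v else 0)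
      = (\<lambda>k'. if k' \<in> {0..<K} \<and> k' \<noteq> k then X k' v' else 0)"
    using msgs by auto
  ultimately have "v q n = v' q n" if "q \<in> W k" "n \<in> {0..<N}" for q n
    using bspec[OF bspec[OF bspec[OF dec v(1)] that(1)] that(2)]
      bspec[OF bspec[OF bspec[OF dec v(2)] that(1)] that(2)] by metis
  then show ?thesis unfolding proj_IV_eq_iff by auto
qed

definition unseen_files :: "nat set \<Rightarrow> nat set" where
  "unseen_files R = {0..<N} - acc_files_of R"

lemma unseen_files_insert: "unseen_files (insert k R) = {n \<in> unseen_files R. n \<notin> Acc k}"
  unfolding unseen_files_def acc_files_of_def by auto

lemma messages_eq_if_known_IVs_eq:
  assumes "R \<subseteq> {0..<K}" "k \<in> R" "v \<in> \<Omega>" "v' \<in> \<Omega>"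
    and "proj_IV (known_IVs R) v = proj_IV (known_IVs R) v'"
  shows "X k v = X k v'"
proof -
  have "acc_IVs k \<subseteq> known_IVs R" using assms(2) unfolding known_IVs_def by auto
  then show ?thesis
    using assms by (intro message_eq) (auto intro: proj_IV_eq_subset)
qed

lemma known_IVs_insert_partition:
  assumes R: "R \<subseteq> {0..<K}" and k: "k < K" "k \<notin> R"
  shows "known_IVs (insert k R) = (known_IVs R \<union> acc_IVs k) \<union> W k \<times> unseen_files (insert k R)"
    and "(known_IVs R \<union> acc_IVs k) \<inter> W k \<times> unseen_files (insert k R) = {}"
proof -
  have "(q, n) \<in> known_IVs R \<union> acc_IVs k"
    if qn: "q \<in> W k" "n < N" "n \<notin> unseen_files (insert k R)" for q n
  proof -
    have "q < Q" using W_subset[OF k(1)] qn(1) by auto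
    moreover obtain k' where "k' \<in> insert k R" "n \<in> Acc k'"
      using qn(2,3) unfolding unseen_files_def acc_files_of_def by auto
    ultimately show ?thesis unfolding known_IVs_def acc_IVs_def by auto
  qed
  then show "known_IVs (insert k R) = (known_IVs R \<union> acc_IVs k) \<union> W k \<times> unseen_files (insert k R)"
    unfolding known_IVs_insert unseen_files_def by fastforce
  have "(q, n) \<notin> known_IVs R \<union> acc_IVs k"
    if qn: "q \<in> W k" "n \<in> unseen_files (insert k R)" for q n
  proof -
    have "q \<notin> W k'" if "k' \<in> R" for k'
      using W_disjoint[OF k(1), of k'] R k(2) that qn(1) by fastforce
    then show ?thesis
      using qn(2) unfolding known_IVs_def acc_IVs_def unseen_files_def acc_files_of_def by auto
  qed
  then show "(known_IVs R \<union> acc_IVs k) \<inter> W k \<times> unseen_files (insert k R) = {}"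
    by auto
qed

lemma card_known_IVs_insert:
  assumes R: "R \<subseteq> {0..<K}" and k: "k < K" "k \<notin> R"
  shows "card (known_IVs (insert k R))
       = card (known_IVs R \<union> acc_IVs k) + Q div K * card (unseen_files (insert k R))"
proof -
  have "finite (known_IVs R \<union> acc_IVs k)"
    using known_IVs_subset[OF R] acc_IVs_subset[of k] by (auto intro: finite_subset)
  moreover have "finite (W k \<times> unseen_files (insert k R))"
    using W_subset[OF k(1)] unfolding unseen_files_def by (auto intro: finite_subset)
  ultimately show ?thesis
    unfolding known_IVs_insert_partition(1)[OF assms]
    using known_IVs_insert_partition(2)[OF assms] card_W[OF k(1)]
    by (simp add: card_Un_disjoint card_cartesian_product)
qed

lemma unif_entropy_message_acc_IVs:
  assumes "k < K"
  shows "unif_entropy \<Omega> (\<lambda>v. ((X k v, proj_IV (known_IVs R) v), proj_IV (acc_IVs k) v))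
       = unif_entropy \<Omega> (proj_IV (known_IVs R \<union> acc_IVs k))"
proof (rule unif_entropy_cong)
  fix a b assume ab: "a \<in> \<Omega>" "b \<in> \<Omega>"
  show "((X k a, proj_IV (known_IVs R) a), proj_IV (acc_IVs k) a)
      = ((X k b, proj_IV (known_IVs R) b), proj_IV (acc_IVs k) b)
    \<longleftrightarrow> proj_IV (known_IVs R \<union> acc_IVs k) a = proj_IV (known_IVs R \<union> acc_IVs k) b"
    using message_eq[OF assms ab] unfolding proj_IV_Un_eq_iff by auto
qed

text \<open>From its accessible IVs and all other messages, reducer \<open>k\<close> decodes its demanded
  IVs; conversely its accessible IVs determine its own message.\<close>
lemma unif_entropy_decode_reducer:
  assumes S: "S \<subseteq> {0..<K}" and k: "k \<in> S"
  defines "R \<equiv> {0..<K} - S"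
  shows "unif_entropy \<Omega>
           (\<lambda>v. (joint X (S - {k}) v, (X k v, proj_IV (known_IVs R) v), proj_IV (acc_IVs k) v))
       = unif_entropy \<Omega> (\<lambda>v. (joint X (S - {k}) v, proj_IV (known_IVs (insert k R)) v))"
proof (rule unif_entropy_cong)
  fix a b assume a: "a \<in> \<Omega>" and b: "b \<in> \<Omega>"
  have kK: "k < K" and RK: "R \<subseteq> {0..<K}" using S k unfolding R_def by auto
  show "(joint X (S - {k}) a, (X k a, proj_IV (known_IVs R) a), proj_IV (acc_IVs k) a)
      = (joint X (S - {k}) b, (X k b, proj_IV (known_IVs R) b), proj_IV (acc_IVs k) b)
    \<longleftrightarrow> (joint X (S - {k}) a, proj_IV (known_IVs (insert k R)) a)
      = (joint X (S - {k}) b, proj_IV (known_IVs (insert k R)) b)"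
    (is "?lhs \<longleftrightarrow> ?rhs")
  proof
    assume h: ?lhs
    have "X k' a = X k' b" if "k' < K" "k' \<noteq> k" for k'
    proof (cases "k' \<in> S")
      case True
      then show ?thesis
        using h that joint_eqD[of X "S - {k}" a b k'] by auto
    next
      case False
      then have "k' \<in> R" using that unfolding R_def by auto
      then show ?thesis using messages_eq_if_known_IVs_eq[OF RK _ a b] h by auto
    qed
    then have "proj_IV (W k \<times> {0..<N}) a = proj_IV (W k \<times> {0..<N}) b"
      using demanded_IVs_eq[OF kK a b] h by auto
    then show ?rhs
      using h unfolding known_IVs_insert by (auto simp: proj_IV_Un_eq_iff)
  next
    assume h: ?rhs
    then have "proj_IV (known_IVs R) a = proj_IV (known_IVs R) b"
      "proj_IV (acc_IVs k) a = proj_IV (acc_IVs k) b"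
      unfolding known_IVs_insert by (auto simp: proj_IV_Un_eq_iff)
    then show ?lhs using h message_eq[OF kK a b] by auto
  qed
qed

text \<open>The peeling step of the induction: conditioning additionally on the accessible IVs of
  reducer \<open>k\<close> reveals its demanded IVs of the files unseen by \<open>R \<union> {k}\<close>, which are
  independent of everything conditioned on before.\<close>
lemma cond_entropy_remove_reducer:
  assumes S: "S \<subseteq> {0..<K}" and k: "k \<in> S"
  defines "R \<equiv> {0..<K} - S"
  shows "real t * real (Q div K) * real (card (unseen_files (insert k R))) * ln 2
         + unif_cond_entropy \<Omega> (joint X (S - {k})) (proj_IV (known_IVs (insert k R)))
       \<le> unif_cond_entropy \<Omega> (joint X (S - {k})) (\<lambda>v. (X k v, proj_IV (known_IVs R) v))"
proof -
  have kK: "k < K" and RK: "R \<subseteq> {0..<K}" and kR: "k \<notin> R"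
    using S k unfolding R_def by auto
  have sub1: "known_IVs (insert k R) \<subseteq> {0..<Q} \<times> {0..<N}"
    using known_IVs_subset[of "insert k R"] RK kK by auto
  have sub2: "known_IVs R \<union> acc_IVs k \<subseteq> {0..<Q} \<times> {0..<N}"
    using known_IVs_subset[OF RK] acc_IVs_subset by auto
  have "unif_cond_entropy \<Omega> (joint X (S - {k}))
          (\<lambda>v. ((X k v, proj_IV (known_IVs R) v), proj_IV (acc_IVs k) v))
      = unif_cond_entropy \<Omega> (joint X (S - {k})) (proj_IV (known_IVs (insert k R)))
        + (unif_entropy \<Omega> (proj_IV (known_IVs (insert k R)))
           - unif_entropy \<Omega> (proj_IV (known_IVs R \<union> acc_IVs k)))"
    using unif_entropy_decode_reducer[OF S k] unif_entropy_message_acc_IVs[OF kK]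
    unfolding unif_cond_entropy_def R_def by simp
  also have "unif_entropy \<Omega> (proj_IV (known_IVs (insert k R)))
        - unif_entropy \<Omega> (proj_IV (known_IVs R \<union> acc_IVs k))
      = real t * real (Q div K) * real (card (unseen_files (insert k R))) * ln 2"
    unfolding unif_entropy_proj_IV[OF sub1] unif_entropy_proj_IV[OF sub2]
      card_known_IVs_insert[OF RK kK kR] by (simp add: algebra_simps)
  finally show ?thesis
    using unif_cond_entropy_conditioning_le[OF finite_IV_space[of Q N t], where f = "joint X (S - {k})"
        and g = "\<lambda>v. (X k v, proj_IV (known_IVs R) v)" and h = "proj_IV (acc_IVs k)"]
    by linarith
qed

definition n_access :: "nat set \<Rightarrow> nat \<Rightarrow> nat" where
  "n_access S n = card {k\<in>S. n \<in> Acc k}"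

text \<open>The bound on \<open>H(X\<^sub>S | Y\<^sub>R)\<close>, \<open>R\<close> the reducers outside \<open>S\<close>, in units of
  \<open>t (Q / K) ln 2\<close>.  A file that no reducer of \<open>S\<close> accesses contributes \<open>0\<close> (division by zero).\<close>
definition han_bound :: "nat set \<Rightarrow> real" where
  "han_bound S = (\<Sum>n\<in>unseen_files ({0..<K} - S).
     (real (card S) - real (n_access S n)) / real (n_access S n))"

lemma n_access_le_card: "finite S \<Longrightarrow> n_access S n \<le> card S"
  unfolding n_access_def by (intro card_mono) auto

lemma card_not_access: "finite S \<Longrightarrow> card {k\<in>S. n \<notin> Acc k} = card S - n_access S n"
proof -
  assume "finite S"
  have "{k\<in>S. n \<notin> Acc k} = S - {k\<in>S. n \<in> Acc k}" by auto
  then show ?thesis unfolding n_access_def using \<open>finite S\<close> by (simp add: card_Diff_subset)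
qed

lemma han_bound_remove:
  assumes S: "S \<subseteq> {0..<K}" and k: "k \<in> S"
  shows "real (card (unseen_files (insert k ({0..<K} - S)))) + han_bound (S - {k})
       = (\<Sum>n\<in>unseen_files ({0..<K} - S). if n \<notin> Acc k
            then 1 + (real (card S) - 1 - real (n_access S n)) / real (n_access S n) else 0)"
proof -
  define D where "D = unseen_files ({0..<K} - S)"
  have "finite S" "finite D" using S unfolding D_def unseen_files_def by (auto intro: finite_subset)
  have compl: "{0..<K} - (S - {k}) = insert k ({0..<K} - S)" using S k by auto
  have "n_access (S - {k}) n = n_access S n" if "n \<notin> Acc k" for n
    unfolding n_access_def using that by (metis (lifting) Diff_iff singletonD)
  moreover have "real (card (S - {k})) = real (card S) - 1"
    using k \<open>finite S\<close> card_gt_0_iff[of S] by (auto simp: of_nat_diff)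
  ultimately have "han_bound (S - {k}) = (\<Sum>n\<in>{n\<in>D. n \<notin> Acc k}.
      (real (card S) - 1 - real (n_access S n)) / real (n_access S n))"
    unfolding han_bound_def compl unseen_files_insert D_def by (intro sum.cong) auto
  moreover have "unseen_files (insert k ({0..<K} - S)) = {n\<in>D. n \<notin> Acc k}"
    unfolding unseen_files_insert D_def ..
  ultimately show ?thesis
    using \<open>finite D\<close> unfolding D_def[symmetric]
    by (simp add: sum.If_cases Int_def sum.distrib)
qed

text \<open>Each file \<open>n\<close> unseen by the complement of \<open>S\<close> is counted by the \<open>card S - j\<close> reducers
  \<open>k \<in> S\<close> not accessing it, \<open>j = n_access S n\<close>, each time with weight
  \<open>1 + (card S - 1 - j) / j = m / j\<close>.\<close>
lemma han_bound_recursion: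
  assumes S: "S \<subseteq> {0..<K}" and cS: "card S = Suc m"
  shows "real m * han_bound S
       \<le> (\<Sum>k\<in>S. real (card (unseen_files (insert k ({0..<K} - S)))) + han_bound (S - {k}))"
proof -
  define D where "D = unseen_files ({0..<K} - S)"
  define j where "j n = real (n_access S n)" for n
  have "finite S" "finite D" using S unfolding D_def unseen_files_def by (auto intro: finite_subset)
  have "(\<Sum>k\<in>S. real (card (unseen_files (insert k ({0..<K} - S)))) + han_bound (S - {k}))
      = (\<Sum>k\<in>S. \<Sum>n\<in>D. if n \<notin> Acc k then 1 + (real (card S) - 1 - j n) / j n else 0)"
    unfolding D_def j_def using S by (intro sum.cong refl han_bound_remove)
  also have "\<dots> = (\<Sum>n\<in>D. \<Sum>k\<in>S. if n \<notin> Acc k then 1 + (real (card S) - 1 - j n) / j n else 0)"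
    by (rule sum.swap)
  also have "\<dots> = (\<Sum>n\<in>D. (real (card S) - j n) * (1 + (real (card S) - 1 - j n) / j n))"
  proof (rule sum.cong[OF refl])
    fix n
    have "real (card {k\<in>S. n \<notin> Acc k}) = real (card S) - j n"
      unfolding j_def card_not_access[OF \<open>finite S\<close>]
      using n_access_le_card[OF \<open>finite S\<close>] by (simp add: of_nat_diff)
    then show "(\<Sum>k\<in>S. if n \<notin> Acc k then 1 + (real (card S) - 1 - j n) / j n else 0)
        = (real (card S) - j n) * (1 + (real (card S) - 1 - j n) / j n)"
      using \<open>finite S\<close> by (simp add: sum.If_cases Int_def)
  qed
  also have "\<dots> \<ge> (\<Sum>n\<in>D. real m * ((real (card S) - j n) / j n))"
  proof (rule sum_mono)
    fix n
    show "real m * ((real (card S) - j n) / j n)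
        \<le> (real (card S) - j n) * (1 + (real (card S) - 1 - j n) / j n)"
    proof (cases "j n = 0")
      case False
      then show ?thesis using cS by (simp add: field_simps)
    qed (simp add: cS)
  qed
  finally show ?thesis
    unfolding han_bound_def D_def j_def by (simp add: sum_distrib_left)
qed

lemma han_bound_le_one_reducer:
  assumes "finite S" "card S \<le> 1"
  shows "han_bound S = 0"
proof -
  have "(real (card S) - real (n_access S n)) / real (n_access S n) = 0" for n
    using n_access_le_card[OF assms(1), of n] assms(2) by (cases "n_access S n") auto
  then show ?thesis
    unfolding han_bound_def by (intro sum.neutral) blast
qed

text \<open>Han's inequality bounds \<open>(card S - 1) H(X\<^sub>S | Y\<^sub>R)\<close> by the sum over \<open>k \<in> S\<close> of
  \<open>H(X\<^bsub>S - {k}\<^esub> | X\<^sub>k, Y\<^sub>R)\<close>, and each of these is bounded by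
  \<open>cond_entropy_remove_reducer\<close> and the hypothesis for \<open>S - {k}\<close>.\<close>
lemma han_bound_le_cond_entropy_step:
  assumes S: "S \<subseteq> {0..<K}" and cS: "card S = Suc m" and "m \<noteq> 0"
    and IH: "\<And>k. k \<in> S \<Longrightarrow> real t * real (Q div K) * ln 2 * han_bound (S - {k})
      \<le> unif_cond_entropy \<Omega> (joint X (S - {k})) (proj_IV (known_IVs ({0..<K} - (S - {k}))))"
  shows "real t * real (Q div K) * ln 2 * han_bound S
       \<le> unif_cond_entropy \<Omega> (joint X S) (proj_IV (known_IVs ({0..<K} - S)))"
proof -
  define T where "T = real t * real (Q div K) * ln 2"
  define R where "R = {0..<K} - S"
  have "finite S" using S by (auto intro: finite_subset)
  have step: "T * (real (card (unseen_files (insert k R))) + han_bound (S - {k}))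
      \<le> unif_cond_entropy \<Omega> (joint X (S - {k})) (\<lambda>v. (X k v, proj_IV (known_IVs R) v))"
    if k: "k \<in> S" for k
  proof -
    have "{0..<K} - (S - {k}) = insert k R" using S k unfolding R_def by auto
    then show ?thesis
      using IH[OF k] cond_entropy_remove_reducer[OF S k]
      unfolding T_def R_def by (simp add: algebra_simps)
  qed
  have "real m * (T * han_bound S)
      \<le> T * (\<Sum>k\<in>S. real (card (unseen_files (insert k R))) + han_bound (S - {k}))"
    using mult_left_mono[OF han_bound_recursion[OF S cS], of T]
    unfolding R_def T_def by (simp add: mult_ac)
  also have "\<dots> \<le> (\<Sum>k\<in>S. unif_cond_entropy \<Omega> (joint X (S - {k})) (\<lambda>v. (X k v, proj_IV (known_IVs R) v)))"
    unfolding sum_distrib_left using step by (rule sum_mono)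
  also have "\<dots> \<le> real m * unif_cond_entropy \<Omega> (joint X S) (proj_IV (known_IVs R))"
    using han_inequality[OF finite_IV_space[of Q N t] \<open>finite S\<close>, of X "proj_IV (known_IVs R)"]
    unfolding cS by simp
  finally show ?thesis
    using \<open>m \<noteq> 0\<close> unfolding T_def R_def by simp
qed

lemma han_bound_le_cond_entropy:
  assumes "S \<subseteq> {0..<K}"
  shows "real t * real (Q div K) * ln 2 * han_bound S
       \<le> unif_cond_entropy \<Omega> (joint X S) (proj_IV (known_IVs ({0..<K} - S)))"
  using assms
proof (induction "card S" arbitrary: S)
  case 0
  then have "finite S" by (auto intro: finite_subset)
  then show ?case
    using 0 han_bound_le_one_reducer unif_cond_entropy_nonneg[OF finite_IV_space] by simp
next
  case (Suc m)
  have "finite S" using Suc.prems by (auto intro: finite_subset)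
  show ?case
  proof (cases "m = 0")
    case False
    show ?thesis
    proof (rule han_bound_le_cond_entropy_step[OF Suc.prems Suc.hyps(2)[symmetric] False])
      fix k assume "k \<in> S"
      then have "m = card (S - {k})" using Suc.hyps(2) \<open>finite S\<close> by simp
      then show "real t * real (Q div K) * ln 2 * han_bound (S - {k})
          \<le> unif_cond_entropy \<Omega> (joint X (S - {k})) (proj_IV (known_IVs ({0..<K} - (S - {k}))))"
        using Suc.hyps(1)[of "S - {k}"] Suc.prems by auto
    qed
  qed (use Suc.hyps(2) han_bound_le_one_reducer[OF \<open>finite S\<close>]
        unif_cond_entropy_nonneg[OF finite_IV_space] in simp)
qed

lemma han_bound_le_total_load:
  "real t * real (Q div K) * han_bound {0..<K} \<le> real (\<Sum>k<K. l k)"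
proof -
  define msgs where "msgs = PiE {0..<K} (\<lambda>k. {..<(2::nat) ^ l k})"
  have no_IVs: "proj_IV (known_IVs {}) = (\<lambda>v p. 0)"
    unfolding known_IVs_def proj_IV_def by simp
  have "unif_entropy \<Omega> (\<lambda>v. (joint X {0..<K} v, proj_IV (known_IVs {}) v))
      = unif_entropy \<Omega> (joint X {0..<K})"
    unfolding no_IVs by (rule unif_entropy_cong) simp
  then have "unif_cond_entropy \<Omega> (joint X {0..<K}) (proj_IV (known_IVs {}))
      = unif_entropy \<Omega> (joint X {0..<K})"
    unfolding unif_cond_entropy_def no_IVs unif_entropy_const by simp
  then have "real t * real (Q div K) * ln 2 * han_bound {0..<K} \<le> unif_entropy \<Omega> (joint X {0..<K})"
    using han_bound_le_cond_entropy[of "{0..<K}"] by simp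
  also have "\<dots> \<le> ln (real (card msgs))"
  proof (rule unif_entropy_le_ln_card[OF finite_IV_space])
    show "joint X {0..<K} ` \<Omega> \<subseteq> msgs"
      unfolding msgs_def joint_def image_subset_iff restrict_PiE_iff using message_lt by simp
  qed (simp add: msgs_def finite_PiE)
  also have "card msgs = 2 ^ (\<Sum>k<K. l k)"
    unfolding msgs_def by (simp add: card_PiE power_sum atLeast0LessThan)
  also have "ln (real ((2::nat) ^ (\<Sum>k<K. l k))) = real (\<Sum>k<K. l k) * ln 2"
    by (simp add: ln_realpow)
  finally show ?thesis by simp
qed

lemma han_bound_all_reducers:
  assumes "\<And>n. n < N \<Longrightarrow> card {k\<in>{0..<K}. n \<notin> Acc k} = A"
  shows "han_bound {0..<K} = real N * (real A / (real K - real A))"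
proof -
  have "n_access {0..<K} n = K - A" "A \<le> K" if "n < N" for n
    using card_not_access[of "{0..<K}" n] n_access_le_card[of "{0..<K}" n] assms[OF that]
      card_mono[of "{0..<K}" "{k\<in>{0..<K}. n \<notin> Acc k}"]
    by auto
  then show ?thesis
    unfolding han_bound_def unseen_files_def acc_files_of_def by (simp add: of_nat_diff)
qed

end

section \<open>The GC-MRG bound\<close>

lemma L_lb_new_eq:
  assumes "K = (\<Sum>a=1..Lam-r. Kal a * (Lam choose a))"
  defines "A \<equiv> \<Sum>a=1..Lam-r. Kal a * ((Lam - r) choose a)"
  shows "L_lb_new Lam r Kal K = real A / (real K * (real K - real A))"
proof -
  have "(\<Sum>a=1..Lam-r. real (Kal a) * (real (Lam choose a) - real ((Lam - r) choose a)))
      = real K - real A"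
    unfolding assms by (simp add: sum_subtractf right_diff_distrib)
  then show ?thesis unfolding L_lb_new_def A_def by simp
qed

theorem theorem6:
  fixes Lam r K N Q t :: nat
    and Kal :: "nat \<Rightarrow> nat"
    and conn M W :: "nat \<Rightarrow> nat set"
    and X :: "nat \<Rightarrow> (nat \<Rightarrow> nat \<Rightarrow> nat) \<Rightarrow> nat"
    and l :: "nat \<Rightarrow> nat"
  assumes "0 < Lam"
    and "1 \<le> r" and "r \<le> Lam - 1"
    and "\<exists>a\<in>{1..Lam-r}. Kal a \<noteq> 0"
    and "K = (\<Sum>a=1..Lam-r. Kal a * (Lam choose a))"
    and "GC_MRG_conn Lam r Kal K conn"
    and "0 < N" and "0 < Q" and "0 < t" and "K dvd Q"
    and "reduce_assignment K Q W"
    and "map_assignment Lam N r M"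
    and "valid_scheme Lam K Q N t conn M W X l"
  shows "comm_load K Q N t l \<ge> L_lb_new Lam r Kal K"
proof -
  define A where "A = (\<Sum>a=1..Lam-r. Kal a * ((Lam - r) choose a))"
  interpret madc_scheme Lam K N Q t conn M W X l
    using assms(11-13) unfolding map_assignment_def by unfold_locales auto
  have "han_bound {0..<K} = real N * (real A / (real K - real A))"
    using han_bound_all_reducers GC_MRG_card_no_access[OF assms(6,5,12)] unfolding A_def by blast
  moreover have "real (Q div K) = real Q / real K"
    using assms(10) by (simp add: real_of_nat_div)
  ultimately have "real t * (real Q / real K) * (real N * (real A / (real K - real A)))
      \<le> real (\<Sum>k<K. l k)"
    using han_bound_le_total_load by simp
  then have "real t * (real Q / real K) * (real N * (real A / (real K - real A))) / (real Q * real N * real t)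
      \<le> comm_load K Q N t l"
    unfolding comm_load_def by (rule divide_right_mono) simp
  moreover have "real t * (real Q / real K) * (real N * x) / (real Q * real N * real t) = x / real K"
    for x :: real
    using assms(7-9) by simp
  ultimately have "real A / (real K - real A) / real K \<le> comm_load K Q N t l"
    by (simp only:)
  then show ?thesis
    unfolding L_lb_new_eq[OF assms(5)] A_def[symmetric] by (simp add: mult.commute)
qed

end
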